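(* For all $n\ge 2$, $f_n=g_{n-1}-g_{n-2}$.
   Context: For $x\in S_n$, $\mathrm{ind}_x(a)$ is the position of the value $a$ in $x$, and $\mathrm{small}_{k}(x)$ is the subsequence of $x$ formed by the entries $1,\dots,k$. An occurrence of the bivincular pattern $123^{\star}$ in $x$ is a pair of indices $a<b<n$ with $x_a<x_b$ and $x_{b+1}=x_b+1$. Let $g_n=|\mathrm{Av}_n(132,123^{\star})|$ be the number of permutations in $S_n$ avoiding both the classical pattern $132$ and $123^{\star}$ (with $g_0=1$), and let $f_n$ be the number of $x\in S_n$ avoiding $132$ such that $\mathrm{ind}_x(n)-1=\mathrm{ind}_x(n-1)>1$ and $\mathrm{small}_{n-1}(x)$ avoids $123^{\star}$. *)

theory Defs
  imports Main
begin

text \<open>Permutations of [n] as lists (one-line notation); list index i (0-based)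
  corresponds to position i+1 of the paper.\<close>
definition perms :: "nat \<Rightarrow> nat list set" where
  "perms n = {x. distinct x \<and> set x = {1..n}}"

definition contains132 :: "nat list \<Rightarrow> bool" where
  "contains132 x \<longleftrightarrow> (\<exists>i j k. i < j \<and> j < k \<and> k < length x \<and>
       x!i < x!k \<and> x!k < x!j)"

definition avoids132 :: "nat list \<Rightarrow> bool" where
  "avoids132 x \<longleftrightarrow> \<not> contains132 x"

definition contains123star :: "nat list \<Rightarrow> bool" where
  "contains123star x \<longleftrightarrow> (\<exists>a b. a < b \<and> Suc b < length x \<and>
       x!a < x!b \<and> x!(Suc b) = x!b + 1)"

definition avoids123star :: "nat list \<Rightarrow> bool" where
  "avoids123star x \<longleftrightarrow> \<not> contains123star x"

definition ind :: "nat list \<Rightarrow> nat \<Rightarrow> nat" where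
  "ind x a = (LEAST i. i < length x \<and> x!i = a) + 1"

definition small :: "nat \<Rightarrow> nat list \<Rightarrow> nat list" where
  "small k x = filter (\<lambda>v. 1 \<le> v \<and> v \<le> k) x"

definition g :: "nat \<Rightarrow> nat" where
  "g n = card {x \<in> perms n. avoids132 x \<and> avoids123star x}"

definition f :: "nat \<Rightarrow> nat" where
  "f n = card {x \<in> perms n. avoids132 x \<and>
      ind x n - 1 = ind x (n - 1) \<and> ind x (n - 1) > 1 \<and>
      avoids123star (small (n - 1) x)}"

end

theory Submission
  imports Defs
begin

text \<open>Write \<open>n = m + 1\<close>. In a permutation counted by \<open>f n\<close> the entry \<open>m + 1\<close> sits right
  after \<open>m\<close>, which is not in front, and deleting it (this is also \<open>small m\<close>) leaves a
  permutation in \<open>Av\<^sub>m(132, 123*)\<close> that does not start with \<open>m\<close>. Inserting the maximum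
  right after \<open>m\<close> neither creates nor destroys a 132: the new entry can only play the 3,
  and \<open>m\<close> can play it instead. So \<open>f n\<close> counts the permutations in \<open>Av\<^sub>m(132, 123*)\<close>
  not starting with \<open>m\<close>. Those starting with \<open>m\<close> are \<open>m\<close> followed by an arbitrary
  element of \<open>Av\<^bsub>m-1\<^esub>(132, 123*)\<close>, since a leading maximum takes part in neither pattern.\<close>

lemma contains132I:
  "i < j \<Longrightarrow> j < k \<Longrightarrow> k < length x \<Longrightarrow> x!i < x!k \<Longrightarrow> x!k < x!j \<Longrightarrow> contains132 x"
  unfolding contains132_def by blast

lemma contains132_insert:
  assumes "contains132 (u @ v)"
  shows "contains132 (u @ w # v)"
proof -
  obtain i j k where occ: "i < j" "j < k" "k < length (u @ v)"
    "(u @ v)!i < (u @ v)!k" "(u @ v)!k < (u @ v)!j"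
    using assms unfolding contains132_def by blast
  define \<psi> where "\<psi> t = (if t < length u then t else Suc t)" for t
  have nth_\<psi>: "(u @ w # v)!(\<psi> t) = (u @ v)!t" for t
    by (simp add: \<psi>_def nth_append Suc_diff_le)
  have "\<psi> i < \<psi> j" "\<psi> j < \<psi> k" "\<psi> k < length (u @ w # v)"
    using occ(1-3) by (auto simp: \<psi>_def)
  then show ?thesis
    using occ(4,5) by (intro contains132I[of "\<psi> i" "\<psi> j" "\<psi> k"]) (simp_all add: nth_\<psi>)
qed

lemma contains132_remove:
  assumes "i < j" "j < k" "k < length (u @ w # v)"
    and "(u @ w # v)!i < (u @ w # v)!k" "(u @ w # v)!k < (u @ w # v)!j"
    and "length u \<notin> {i, j, k}"
  shows "contains132 (u @ v)"
proof -
  define \<chi> where "\<chi> t = (if t < length u then t else t - 1)" for t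
  have nth_\<chi>: "(u @ v)!(\<chi> t) = (u @ w # v)!t" if "t \<noteq> length u" for t
    using that by (auto simp: \<chi>_def nth_append nth_Cons')
  have "\<chi> i < \<chi> j" "\<chi> j < \<chi> k" "\<chi> k < length (u @ v)"
    using assms(1-3,6) by (auto simp: \<chi>_def)
  then show ?thesis
    using assms(4-6) by (intro contains132I[of "\<chi> i" "\<chi> j" "\<chi> k"]) (simp_all add: nth_\<chi>)
qed

lemma contains132_Cons_greater:
  assumes "\<forall>w\<in>set z. w < m"
  shows "contains132 (m # z) \<longleftrightarrow> contains132 z"
proof
  assume "contains132 (m # z)"
  then obtain i j k where occ: "i < j" "j < k" "k < length (m # z)"
    "(m # z)!i < (m # z)!k" "(m # z)!k < (m # z)!j"
    unfolding contains132_def by blast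
  have "(m # z)!k < m"
    using occ(1-3) assms by (cases k) auto
  then have "i \<noteq> 0"
    using occ(4) by (cases i) auto
  then show "contains132 z"
    using contains132_remove[of i j k "[]" m z] occ by auto
next
  assume "contains132 z"
  then show "contains132 (m # z)"
    using contains132_insert[of "[]" z m] by simp
qed

lemma contains132_insert_Suc_after_max:
  assumes "\<forall>w\<in>set u \<union> set v. w < m"
  shows "contains132 (u @ m # Suc m # v) \<longleftrightarrow> contains132 (u @ m # v)"
proof
  let ?x = "u @ m # Suc m # v" and ?top = "Suc (length u)"
  assume "contains132 ?x"
  then obtain i j k where occ: "i < j" "j < k" "k < length ?x" "?x!i < ?x!k" "?x!k < ?x!j"
    unfolding contains132_def by blast
  \<comment> \<open>The maximum \<open>Suc m\<close> can only play the 3, and then its left neighbour \<open>m\<close> can.\<close>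
  have "\<forall>w\<in>set ?x. w \<le> Suc m"
    using assms by (auto simp: ball_Un less_imp_le_nat)
  moreover have "?x!j \<in> set ?x"
    using occ(2,3) by (intro nth_mem) simp
  ultimately have "?x!j \<le> Suc m"
    by blast
  then have ik: "i \<noteq> ?top" "k \<noteq> ?top"
    using occ(4,5) by (auto simp: nth_append)
  have "\<exists>j'. i < j' \<and> j' < k \<and> ?x!k < ?x!j' \<and> j' \<noteq> ?top"
  proof (cases "j = ?top")
    case True
    then obtain s where s: "k = Suc ?top + s" "s < length v"
      using occ(2,3) by (auto dest!: less_imp_Suc_add)
    then have "?x!k < m"
      using assms by (simp add: nth_append)
    moreover have "i \<noteq> length u"
      using occ(4) calculation by (auto simp: nth_append)
    ultimately show ?thesis
      using True occ by (intro exI[of _ "length u"]) (auto simp: nth_append)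
  qed (use occ in blast)
  then obtain j' where "i < j'" "j' < k" "?x!k < ?x!j'" "j' \<noteq> ?top"
    by blast
  then show "contains132 (u @ m # v)"
    using contains132_remove[of i j' k "u @ [m]" "Suc m" v] occ ik by simp
next
  assume "contains132 (u @ m # v)"
  then show "contains132 (u @ m # Suc m # v)"
    using contains132_insert[of "u @ [m]" v "Suc m"] by simp
qed

lemma contains123star_Cons_greater:
  assumes "\<forall>w\<in>set z. w < m"
  shows "contains123star (m # z) \<longleftrightarrow> contains123star z"
proof
  assume "contains123star (m # z)"
  then obtain a b where occ: "a < b" "Suc b < length (m # z)"
    "(m # z)!a < (m # z)!b" "(m # z)!(Suc b) = (m # z)!b + 1"
    unfolding contains123star_def by blast
  obtain b' where b: "b = Suc b'"
    using occ(1) by (cases b) auto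
  have "(m # z)!b < m"
    using b occ(2) assms by simp
  then obtain a' where "a = Suc a'"
    using occ(3) by (cases a) auto
  then show "contains123star z"
    unfolding contains123star_def using occ b by (intro exI[of _ a'] exI[of _ b']) auto
next
  assume "contains123star z"
  then obtain a b where "a < b" "Suc b < length z" "z!a < z!b" "z!(Suc b) = z!b + 1"
    unfolding contains123star_def by blast
  then show "contains123star (m # z)"
    unfolding contains123star_def by (intro exI[of _ "Suc a"] exI[of _ "Suc b"]) auto
qed

lemma ind_nth:
  assumes "distinct x" "i < length x"
  shows "ind x (x!i) = Suc i"
proof -
  have "(LEAST j. j < length x \<and> x!j = x!i) = i"
    by (rule Least_equality) (use assms nth_eq_iff_index_eq in auto)
  then show ?thesis
    unfolding ind_def by simp
qed

lemma ind_append_Cons: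
  "distinct (u @ a # v) \<Longrightarrow> ind (u @ a # v) a = Suc (length u)"
  using ind_nth[of "u @ a # v" "length u"] by simp

lemma adjacent_if_ind_Suc:
  assumes "distinct x" "a \<in> set x" "b \<in> set x" "ind x b = Suc (ind x a)"
  obtains u v where "x = u @ a # b # v"
proof -
  obtain u w where x: "x = u @ a # w"
    using assms(2) by (meson split_list)
  obtain i where i: "i < length x" "x!i = b"
    using assms(3) by (meson in_set_conv_nth)
  have "i = Suc (length u)"
    using assms(1,4) ind_nth[OF assms(1) i(1)] ind_append_Cons[of u a w] i(2) x by simp
  then obtain v where "w = b # v"
    using i x by (cases w) (auto simp: nth_append)
  then show ?thesis
    using that x by blast
qed

lemma finite_perms: "finite (perms n)"
proof -
  have "perms n \<subseteq> {xs. set xs \<subseteq> {1..n} \<and> length xs = n}"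
    unfolding perms_def using distinct_card by fastforce
  then show ?thesis
    using finite_lists_length_eq[of "{1..n}" n] finite_subset by blast
qed

lemma perms_entry_less:
  "u @ m # v \<in> perms m \<Longrightarrow> w \<in> set u \<union> set v \<Longrightarrow> w < m"
  unfolding perms_def by (fastforce simp: order_le_less)

lemma perms_insert_Suc_after_iff:
  "u @ m # Suc m # v \<in> perms (Suc m) \<longleftrightarrow> u @ m # v \<in> perms m"
proof -
  let ?y = "u @ m # v"
  have "distinct (u @ m # Suc m # v) \<longleftrightarrow> distinct ?y \<and> Suc m \<notin> set ?y"
    and "set (u @ m # Suc m # v) = insert (Suc m) (set ?y)"
    and "{1..Suc m} = insert (Suc m) {1..m}" "Suc m \<notin> {1..m}"
    by auto
  then show ?thesis
    unfolding perms_def mem_Collect_eq by (metis insert_ident)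
qed

lemma perms_Cons_top_iff:
  assumes "m \<ge> 1"
  shows "m # z \<in> perms m \<longleftrightarrow> z \<in> perms (m - 1)"
proof -
  have "{1..m} = insert m {1..m - 1}" "m \<notin> {1..m - 1}"
    using assms by auto
  then show ?thesis
    unfolding perms_def mem_Collect_eq distinct.simps list.set by (metis insert_ident)
qed

lemma small_eq_removeAll:
  "x \<in> perms (Suc m) \<Longrightarrow> small m x = removeAll (Suc m) x"
  unfolding small_def perms_def removeAll_filter_not_eq by (rule filter_cong) auto

lemma card_filter_add_card_filter_not:
  assumes "finite A"
  shows "card A = card {x \<in> A. P x} + card {x \<in> A. \<not> P x}"
proof -
  have "A = {x \<in> A. P x} \<union> {x \<in> A. \<not> P x}"
    by blast
  then show ?thesis
    using assms card_Un_disjoint[of "{x \<in> A. P x}" "{x \<in> A. \<not> P x}"] by auto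
qed

definition avoiders :: "nat \<Rightarrow> nat list set" where
  "avoiders n = {x \<in> perms n. avoids132 x \<and> avoids123star x}"

lemma avoiders_Cons_top_iff:
  assumes "m \<ge> 1"
  shows "m # z \<in> avoiders m \<longleftrightarrow> z \<in> avoiders (m - 1)"
proof -
  have "\<forall>w\<in>set z. w < m" if "m # z \<in> perms m"
    using perms_entry_less[of "[]" m z] that by simp
  then show ?thesis
    using perms_Cons_top_iff[OF assms] contains132_Cons_greater contains123star_Cons_greater
    unfolding avoiders_def avoids132_def avoids123star_def by blast
qed

lemma avoiders_insert_Suc_after_iff:
  "u @ m # Suc m # v \<in> perms (Suc m) \<and> avoids132 (u @ m # Suc m # v) \<and>
     avoids123star (small m (u @ m # Suc m # v)) \<longleftrightarrow> u @ m # v \<in> avoiders m"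
proof -
  let ?x = "u @ m # Suc m # v" and ?y = "u @ m # v"
  have "avoids132 ?x \<longleftrightarrow> avoids132 ?y" "small m ?x = ?y" if "?y \<in> perms m"
  proof -
    have bound: "\<forall>w\<in>set u \<union> set v. w < m"
      using perms_entry_less[OF that] by blast
    then show "avoids132 ?x \<longleftrightarrow> avoids132 ?y"
      unfolding avoids132_def using contains132_insert_Suc_after_max by simp
    have "small m ?x = removeAll (Suc m) ?x"
      using that perms_insert_Suc_after_iff small_eq_removeAll by blast
    also have "\<dots> = ?y"
    proof -
      have "Suc m \<notin> set u" "Suc m \<notin> set v"
        using bound by (auto simp: ball_Un)
      then show ?thesis
        by (simp add: removeAll_id)
    qed
    finally show "small m ?x = ?y" .
  qed
  then show ?thesis
    unfolding avoiders_def mem_Collect_eq perms_insert_Suc_after_iff by auto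
qed

lemma card_avoiders_hd_top:
  assumes "m \<ge> 1"
  shows "card {y \<in> avoiders m. hd y = m} = card (avoiders (m - 1))"
proof -
  have "{y \<in> avoiders m. hd y = m} = Cons m ` avoiders (m - 1)"
  proof (intro equalityI subsetI)
    fix y
    assume y: "y \<in> {y \<in> avoiders m. hd y = m}"
    then have "y \<noteq> []"
      using assms unfolding avoiders_def perms_def by auto
    then have "y = m # tl y"
      using y by (cases y) auto
    moreover have "m # tl y \<in> avoiders m"
      using y calculation by (metis (no_types, lifting) mem_Collect_eq)
    then have "tl y \<in> avoiders (m - 1)"
      using avoiders_Cons_top_iff[OF assms] by blast
    ultimately show "y \<in> Cons m ` avoiders (m - 1)"
      by (intro rev_image_eqI)
  qed (use avoiders_Cons_top_iff[OF assms] in auto)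
  then show ?thesis
    by (simp add: card_image)
qed

lemma card_avoiders_hd_not_top:
  assumes "m \<ge> 1"
  shows "card {y \<in> avoiders m. hd y \<noteq> m} = card {(u, v). u \<noteq> [] \<and> u @ m # v \<in> avoiders m}"
    (is "card ?Y = card ?S")
proof -
  have "?Y = (\<lambda>(u, v). u @ m # v) ` ?S"
  proof (intro equalityI subsetI)
    fix y
    assume y: "y \<in> ?Y"
    then have "m \<in> set y"
      using assms unfolding avoiders_def perms_def by auto
    then obtain u v where "y = u @ m # v"
      by (meson split_list)
    moreover have "u \<noteq> []"
      using y calculation by auto
    ultimately show "y \<in> (\<lambda>(u, v). u @ m # v) ` ?S"
      using y by auto
  next
    fix y
    assume "y \<in> (\<lambda>(u, v). u @ m # v) ` ?S"
    then obtain u v where "y = u @ m # v" "u \<noteq> []" "y \<in> avoiders m"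
      by auto
    moreover have "m \<notin> set u"
      using calculation unfolding avoiders_def perms_def by auto
    ultimately show "y \<in> ?Y"
      by (cases u) auto
  qed
  moreover have "inj_on (\<lambda>(u, v). u @ m # v) ?S"
    unfolding avoiders_def perms_def by (auto simp: inj_on_def append_Cons_eq_iff)
  ultimately show ?thesis
    by (simp add: card_image)
qed

lemma f_Suc_eq_card_splits:
  assumes "m \<ge> 1"
  shows "f (Suc m) = card {(u, v). u \<noteq> [] \<and> u @ m # v \<in> avoiders m}"
    (is "_ = card ?S")
proof -
  define X where "X = {x \<in> perms (Suc m). avoids132 x \<and>
      ind x (Suc m) - 1 = ind x m \<and> ind x m > 1 \<and> avoids123star (small m x)}"
  have "X = (\<lambda>(u, v). u @ m # Suc m # v) ` ?S"
  proof (intro equalityI subsetI)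
    fix x
    assume x: "x \<in> X"
    then have "distinct x" "m \<in> set x" "Suc m \<in> set x" "ind x (Suc m) = Suc (ind x m)"
      using assms unfolding X_def perms_def by auto
    then obtain u v where uv: "x = u @ m # Suc m # v"
      by (rule adjacent_if_ind_Suc)
    then have "ind x m = Suc (length u)"
      using \<open>distinct x\<close> ind_append_Cons by simp
    then have "u \<noteq> []"
      using x unfolding X_def by auto
    then have "(u, v) \<in> ?S"
      using x uv avoiders_insert_Suc_after_iff unfolding X_def by auto
    then show "x \<in> (\<lambda>(u, v). u @ m # Suc m # v) ` ?S"
      by (rule rev_image_eqI) (simp add: uv)
  next
    fix x
    assume "x \<in> (\<lambda>(u, v). u @ m # Suc m # v) ` ?S"
    then obtain u v where x: "x = u @ m # Suc m # v" "u \<noteq> []" "u @ m # v \<in> avoiders m"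
      by auto
    then have "x \<in> perms (Suc m)" "avoids132 x" "avoids123star (small m x)"
      using avoiders_insert_Suc_after_iff by blast+
    moreover have "ind x m = Suc (length u)" "ind x (Suc m) = Suc (Suc (length u))"
      using calculation(1) ind_append_Cons[of u m] ind_append_Cons[of "u @ [m]" "Suc m" v] x(1)
      unfolding perms_def by auto
    ultimately show "x \<in> X"
      using x(2) unfolding X_def by auto
  qed
  moreover have "inj_on (\<lambda>(u, v). u @ m # Suc m # v) ?S"
    unfolding avoiders_def perms_def by (auto simp: inj_on_def append_Cons_eq_iff)
  ultimately show ?thesis
    unfolding f_def X_def by (simp add: card_image)
qed

theorem lemma3p19:
  fixes n :: nat
  assumes "n \<ge> 2"
  shows "int (f n) = int (g (n - 1)) - int (g (n - 2))"
proof -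
  define m where "m = n - 1"
  have n: "n = Suc m" "n - 2 = m - 1" and "m \<ge> 1"
    using assms unfolding m_def by auto
  have "finite (avoiders m)"
    unfolding avoiders_def using finite_perms by simp
  then have "card (avoiders m) =
      card {y \<in> avoiders m. hd y = m} + card {y \<in> avoiders m. hd y \<noteq> m}"
    by (rule card_filter_add_card_filter_not)
  moreover have "g k = card (avoiders k)" for k
    unfolding g_def avoiders_def ..
  ultimately show ?thesis
    using n f_Suc_eq_card_splits[OF \<open>m \<ge> 1\<close>] card_avoiders_hd_not_top[OF \<open>m \<ge> 1\<close>]
      card_avoiders_hd_top[OF \<open>m \<ge> 1\<close>] by simp
qed

end
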